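(* Let $\mathbb{K}$ be a field and let $\mathcal F=\{f_n(q)\}_{n=1}^\infty$ be a sequence of polynomials in $\mathbb{K}[q]$ satisfying $f_{mn}(q)=f_m(q)f_n(q^m)$ for all $m,n\in\mathbb N$. Suppose $\mathrm{supp}(\mathcal F)=S(P)$ for some nonempty finite set $P$ of prime numbers, and $f_p(0)=1$ for all $p\in P$. Then there exists a formal power series $F(q)\in\mathbb{K}[[q]]$ such that \[ F(q)=\lim_{\substack{n\to\infty\\ n\in S(P)}}f_n(q), \] i.e. for every $N$ there is $n_0$ such that $f_n(q)\equiv F(q)\pmod{q^N}$ for all $n\in S(P)$ with $n\ge n_0$.
   Context: $\mathbb N=\{1,2,3,\dots\}$. $\mathrm{supp}(\mathcal F)=\{n\in\mathbb N: f_n(q)\ne0\}$. For a set $P$ of primes, $S(P)$ is the multiplicative semigroup of positive integers generated by $P$ (all finite products of elements of $P$, including the empty product $1$). For power series $g,h$, $g\equiv h\pmod{q^N}$ means their coefficients of $q^0,\dots,q^{N-1}$ agree. *)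

theory Defs
  imports "HOL-Computational_Algebra.Computational_Algebra"
begin

inductive_set S_gen :: "nat set \<Rightarrow> nat set" for P :: "nat set" where
  one: "1 \<in> S_gen P"
| mult: "p \<in> P \<Longrightarrow> n \<in> S_gen P \<Longrightarrow> p * n \<in> S_gen P"

definition supp :: "(nat \<Rightarrow> 'a::zero poly) \<Rightarrow> nat set" where
  "supp f = {n. n \<ge> 1 \<and> f n \<noteq> 0}"

end

theory Submission
  imports Defs
begin

text \<open>All \<open>f\<^sub>n\<close> with \<open>n \<in> S(P)\<close> have constant term 1, so for \<open>n, m \<in> S(P)\<close>
  \<open>f\<^sub>n\<^sub>m(q) = f\<^sub>n(q) f\<^sub>m(q\<^sup>n) \<equiv> f\<^sub>n(q)\<close> modulo \<open>q\<^sup>n\<close>. As \<open>nm = mn\<close>, the polynomials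
  \<open>f\<^sub>n\<close> and \<open>f\<^sub>m\<close> agree below degree \<open>min n m\<close>, and since \<open>S(P)\<close> is unbounded their
  coefficients stabilise.\<close>

lemma S_gen_pos:
  assumes "0 \<notin> P" "n \<in> S_gen P"
  shows "n \<ge> 1"
  using assms(2)
proof induction
  case (mult p n)
  have "p \<noteq> 0"
    using assms(1) mult.hyps(1) by metis
  with mult.IH show ?case
    by (simp add: Suc_le_eq)
qed simp

lemma S_gen_power:
  assumes "p \<in> P"
  shows "p ^ k \<in> S_gen P"
  by (induction k) (auto intro: S_gen.mult S_gen.one[simplified] assms)

lemma S_gen_unbounded:
  assumes "p \<in> P" "p \<ge> 2"
  shows "\<exists>n\<in>S_gen P. k < n"
proof
  have "k < 2 ^ k" by (rule less_exp)
  also have "\<dots> \<le> p ^ k" using assms(2) by (simp add: power_mono)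
  finally show "k < p ^ k" .
qed (rule S_gen_power[OF assms(1)])

lemma coeff_mult_pcompose_monom_low:
  fixes g h :: "'a::comm_ring_1 poly"
  assumes "poly g 0 = 1" "k < n"
  shows "coeff (h * pcompose g (monom 1 n)) k = coeff h k"
proof -
  obtain g' where g: "g = pCons 1 g'"
    using assms(1) by (cases g) auto
  have "h * pcompose g (monom 1 n) = h + monom 1 n * (h * pcompose g' (monom 1 n))"
    by (simp add: g pcompose_pCons one_pCons algebra_simps)
  thus ?thesis using assms(2) by (simp add: coeff_monom_mult)
qed

lemma fps_limit_of_agreeing_polys:
  fixes g :: "nat \<Rightarrow> 'a::zero poly"
  assumes unbounded: "\<And>k. \<exists>n\<in>A. k < n"
    and agree: "\<And>n m j. n \<in> A \<Longrightarrow> m \<in> A \<Longrightarrow> j < n \<Longrightarrow> j < m \<Longrightarrow> coeff (g n) j = coeff (g m) j"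
  shows "\<exists>F. \<forall>N. \<exists>n0. \<forall>n\<in>A. n \<ge> n0 \<longrightarrow> (\<forall>k<N. coeff (g n) k = fps_nth F k)"
proof -
  define r where "r k = (SOME n. n \<in> A \<and> k < n)" for k
  have r: "r k \<in> A \<and> k < r k" for k
    unfolding r_def by (rule someI_ex) (use unbounded in blast)
  define F where "F = Abs_fps (\<lambda>k. coeff (g (r k)) k)"
  have "coeff (g n) k = fps_nth F k" if "n \<in> A" "k < n" for n k
    using agree[OF that(1) _ that(2)] r unfolding F_def by simp
  thus ?thesis by (metis order.strict_trans2)
qed

locale poly_mult_sequence =
  fixes f :: "nat \<Rightarrow> 'a::idom poly"
  assumes f_mult: "\<And>m n. m \<ge> 1 \<Longrightarrow> n \<ge> 1 \<Longrightarrow> f (m * n) = f m * pcompose (f n) (monom 1 m)"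
begin

lemma f_one:
  assumes "f 1 \<noteq> 0"
  shows "f 1 = 1"
proof -
  have "monom (1::'a) 1 = [:0, 1:]"
    by (simp add: monom_Suc)
  hence "f 1 * f 1 = f 1 * 1"
    using f_mult[of 1 1] by (simp only: pcompose_idR mult_1) simp
  thus ?thesis using assms by simp
qed

context
  fixes P :: "nat set"
  assumes zero_notin_P: "0 \<notin> P"
    and f_one_eq: "f 1 = 1"
    and poly_f_prime_0: "\<forall>p\<in>P. poly (f p) 0 = 1"
begin

lemma poly_f_0_on_S_gen:
  assumes "n \<in> S_gen P"
  shows "poly (f n) 0 = 1"
  using assms
proof induction
  case one
  show ?case using f_one_eq by (metis poly_1)
next
  case (mult p n)
  have "p \<ge> 1"
    using zero_notin_P mult.hyps(1) by (cases p) auto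
  moreover have "n \<ge> 1"
    using S_gen_pos[OF zero_notin_P mult.hyps(2)] .
  ultimately show ?case
    using mult f_mult poly_f_prime_0 by (simp add: poly_pcompose poly_monom power_0_left)
qed

lemma coeff_f_agree_on_S_gen:
  assumes "n \<in> S_gen P" "m \<in> S_gen P" "j < n" "j < m"
  shows "coeff (f n) j = coeff (f m) j"
proof -
  have low: "coeff (f (a * b)) j = coeff (f a) j"
    if "a \<in> S_gen P" "b \<in> S_gen P" "j < a" for a b
    using f_mult[OF S_gen_pos[OF zero_notin_P that(1)] S_gen_pos[OF zero_notin_P that(2)]]
      coeff_mult_pcompose_monom_low[OF poly_f_0_on_S_gen[OF that(2)] that(3)]
    by simp
  show ?thesis
    using low[OF assms(1,2,3)] low[OF assms(2,1,4)] by (simp add: mult.commute)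
qed

end

end

theorem mainTheorem4:
  fixes f :: "nat \<Rightarrow> 'a::field poly" and P :: "nat set"
  assumes mult: "\<And>m n. m \<ge> 1 \<Longrightarrow> n \<ge> 1 \<Longrightarrow>
                   f (m * n) = f m * pcompose (f n) (monom 1 m)"
    and P_primes: "\<forall>p\<in>P. prime p"
    and P_fin: "finite P" and P_ne: "P \<noteq> {}"
    and supp_eq: "supp f = S_gen P"
    and f_p0: "\<forall>p\<in>P. poly (f p) 0 = 1"
  shows "\<exists>F :: 'a fps. \<forall>N. \<exists>n0. \<forall>n\<in>S_gen P. n \<ge> n0 \<longrightarrow>
            (\<forall>k<N. coeff (f n) k = fps_nth F k)"
proof -
  interpret poly_mult_sequence f
    using mult by unfold_locales
  have zero_notin_P: "0 \<notin> P"
    using P_primes by auto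
  have "f 1 \<noteq> 0"
    using supp_eq S_gen.one unfolding supp_def by blast
  hence f1: "f 1 = 1"
    by (rule f_one)
  obtain p where "p \<in> P"
    using P_ne by blast
  moreover have "p \<ge> 2"
    using \<open>p \<in> P\<close> P_primes prime_ge_2_nat by blast
  ultimately have "\<exists>n\<in>S_gen P. k < n" for k
    by (rule S_gen_unbounded)
  thus ?thesis
    using coeff_f_agree_on_S_gen[OF zero_notin_P f1 f_p0] by (rule fps_limit_of_agreeing_polys)
qed

end
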